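(* Let $A$ be a Banach algebra, let $X$ be a commutative Banach algebra which is also a Banach $A$-bimodule and satisfies $\bigcap_{\varphi\in\Delta(X)}\ker\varphi=\{0\}$, let $\psi:A\to X$ be a continuous algebra homomorphism, and let $D:A\to X$ be a bounded linear operator. Then the following are equivalent: (i) $D$ is a $\psi$-derivation, i.e. $D(ab)=D(a)\psi(b)+\psi(a)D(b)$ for all $a,b\in A$ (products taken in $X$); (ii) for every $\varphi\in\Delta(X)$, $\varphi\circ D$ is a $\varphi\circ\psi$-derivation, i.e. $(\varphi\circ D)(ab)=(\varphi\circ D)(a)\,(\varphi\circ\psi)(b)+(\varphi\circ\psi)(a)\,(\varphi\circ D)(b)$ for all $a,b\in A$; (iii) for every $\varphi\in\Delta(X)$, $\varphi\circ D$ is a $(\varphi,\psi)$-point derivation on $A$, i.e. $(\varphi\circ D)(ab)=\varphi(\psi(a))\,(\varphi\circ D)(b)+\varphi(\psi(b))\,(\varphi\circ D)(a)$ for all $a,b\in A$.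
   Context: $\Delta(X)$ denotes the set of all nonzero multiplicative linear functionals on the Banach algebra $X$. The condition $\bigcap_{\varphi\in\Delta(X)}\ker\varphi=\{0\}$ is the paper's notion of semisimplicity. *)

theory Defs
  imports "HOL-Analysis.Analysis"
begin

text \<open>Complex Banach algebras: HOL has only real normed algebras as type classes, so a
complex structure is given by an explicit complex scalar multiplication sc extending
the real one, compatible with the norm and the product.\<close>

definition complex_banach_algebra ::
  "(complex \<Rightarrow> 'a::{real_normed_algebra,banach} \<Rightarrow> 'a) \<Rightarrow> bool" where
  "complex_banach_algebra sc \<longleftrightarrow>
     (\<forall>x. sc 1 x = x) \<and>
     (\<forall>c d x. sc c (sc d x) = sc (c * d) x) \<and>
     (\<forall>c d x. sc (c + d) x = sc c x + sc d x) \<and>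
     (\<forall>c x y. sc c (x + y) = sc c x + sc c y) \<and>
     (\<forall>r x. sc (complex_of_real r) x = r *\<^sub>R x) \<and>
     (\<forall>c x. norm (sc c x) = cmod c * norm x) \<and>
     (\<forall>c x y. sc c (x * y) = sc c x * y \<and> sc c (x * y) = x * sc c y)"

definition bounded_clinear_op ::
  "(complex \<Rightarrow> 'a::real_normed_vector \<Rightarrow> 'a) \<Rightarrow> (complex \<Rightarrow> 'b::real_normed_vector \<Rightarrow> 'b)
    \<Rightarrow> ('a \<Rightarrow> 'b) \<Rightarrow> bool" where
  "bounded_clinear_op scA scB f \<longleftrightarrow>
     bounded_linear f \<and> (\<forall>c x. f (scA c x) = scB c (f x))"

definition cont_alg_hom ::
  "(complex \<Rightarrow> 'a::real_normed_algebra \<Rightarrow> 'a) \<Rightarrow> (complex \<Rightarrow> 'b::real_normed_algebra \<Rightarrow> 'b)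
    \<Rightarrow> ('a \<Rightarrow> 'b) \<Rightarrow> bool" where
  "cont_alg_hom scA scB f \<longleftrightarrow>
     bounded_clinear_op scA scB f \<and> (\<forall>a b. f (a * b) = f a * f b)"

definition banach_bimodule ::
  "(complex \<Rightarrow> 'a::real_normed_algebra \<Rightarrow> 'a) \<Rightarrow> (complex \<Rightarrow> 'x::real_normed_vector \<Rightarrow> 'x)
    \<Rightarrow> ('a \<Rightarrow> 'x \<Rightarrow> 'x) \<Rightarrow> ('x \<Rightarrow> 'a \<Rightarrow> 'x) \<Rightarrow> bool" where
  "banach_bimodule scA scX la ra \<longleftrightarrow>
     bounded_bilinear la \<and> bounded_bilinear ra \<and>
     (\<forall>c a x. la (scA c a) x = scX c (la a x) \<and> la a (scX c x) = scX c (la a x)) \<and>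
     (\<forall>c a x. ra x (scA c a) = scX c (ra x a) \<and> ra (scX c x) a = scX c (ra x a)) \<and>
     (\<forall>a b x. la (a * b) x = la a (la b x)) \<and>
     (\<forall>a b x. ra x (a * b) = ra (ra x a) b) \<and>
     (\<forall>a b x. la a (ra x b) = ra (la a x) b)"

definition characters ::
  "(complex \<Rightarrow> 'x::real_normed_algebra \<Rightarrow> 'x) \<Rightarrow> ('x \<Rightarrow> complex) set" where
  "characters scX = {\<phi>. (\<forall>x y. \<phi> (x + y) = \<phi> x + \<phi> y) \<and>
                         (\<forall>c x. \<phi> (scX c x) = c * \<phi> x) \<and>
                         (\<forall>x y. \<phi> (x * y) = \<phi> x * \<phi> y) \<and>
                         \<phi> \<noteq> (\<lambda>_. 0)}"

definition psi_derivation :: "('a::times \<Rightarrow> 'm::{times,plus}) \<Rightarrow> ('a \<Rightarrow> 'm) \<Rightarrow> bool" where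
  "psi_derivation \<psi> D \<longleftrightarrow> (\<forall>a b. D (a * b) = D a * \<psi> b + \<psi> a * D b)"

definition point_derivation ::
  "('x \<Rightarrow> complex) \<Rightarrow> ('a::times \<Rightarrow> 'x) \<Rightarrow> ('a \<Rightarrow> complex) \<Rightarrow> bool" where
  "point_derivation \<phi> \<psi> d \<longleftrightarrow>
     (\<forall>a b. d (a * b) = \<phi> (\<psi> a) * d b + \<phi> (\<psi> b) * d a)"

end

theory Submission
  imports Defs
begin

text \<open>Characters are additive and multiplicative, so applying one to the identity
  D(ab) = D(a)\<psi>(b) + \<psi>(a)D(b) in X gives the scalar identity (ii); conversely, by
  semisimplicity the characters separate the points of X, so (ii) for all characters
  forces the identity in X. Conditions (ii) and (iii) differ only by commutativity of
  multiplication and addition in \<complex>.\<close>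

lemma characters_add: "\<phi> \<in> characters scX \<Longrightarrow> \<phi> (x + y) = \<phi> x + \<phi> y"
  unfolding characters_def by blast

lemma characters_mult: "\<phi> \<in> characters scX \<Longrightarrow> \<phi> (x * y) = \<phi> x * \<phi> y"
  unfolding characters_def by blast

lemma characters_diff:
  assumes "\<phi> \<in> characters scX"
  shows "\<phi> (x - y) = \<phi> x - \<phi> y"
proof -
  have "\<phi> x = \<phi> (x - y) + \<phi> y"
    using characters_add [OF assms, of "x - y" y] by simp
  then show ?thesis by simp
qed

lemma characters_separate_points:
  assumes semisimple: "(\<Inter>\<phi>\<in>characters scX. {x. \<phi> x = 0}) = {0}"
    and eq: "\<And>\<phi>. \<phi> \<in> characters scX \<Longrightarrow> \<phi> x = \<phi> y"
  shows "x = y"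
proof -
  have "x - y \<in> (\<Inter>\<phi>\<in>characters scX. {x. \<phi> x = 0})"
    using eq by (simp add: characters_diff)
  then show ?thesis
    using semisimple by simp
qed

lemma psi_derivation_comp_character:
  assumes "psi_derivation \<psi> D" and "\<phi> \<in> characters scX"
  shows "psi_derivation (\<phi> \<circ> \<psi>) (\<phi> \<circ> D)"
  using assms unfolding psi_derivation_def
  by (simp add: characters_add characters_mult)

lemma psi_derivation_iff_characters:
  assumes "(\<Inter>\<phi>\<in>characters scX. {x. \<phi> x = 0}) = {0}"
  shows "psi_derivation \<psi> D \<longleftrightarrow>
           (\<forall>\<phi>\<in>characters scX. psi_derivation (\<phi> \<circ> \<psi>) (\<phi> \<circ> D))"
proof
  assume "\<forall>\<phi>\<in>characters scX. psi_derivation (\<phi> \<circ> \<psi>) (\<phi> \<circ> D)"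
  then have "\<phi> (D (a * b)) = \<phi> (D a * \<psi> b + \<psi> a * D b)"
    if "\<phi> \<in> characters scX" for \<phi> a b
    using that unfolding psi_derivation_def
    by (simp add: characters_add characters_mult)
  then show "psi_derivation \<psi> D"
    unfolding psi_derivation_def
    using characters_separate_points [OF assms] by blast
qed (simp add: psi_derivation_comp_character)

lemma psi_derivation_iff_point_derivation:
  "psi_derivation (\<phi> \<circ> \<psi>) d \<longleftrightarrow> point_derivation \<phi> \<psi> d"
  unfolding psi_derivation_def point_derivation_def
  by (simp add: mult.commute add.commute)

theorem theorem2p14:
  fixes scA :: "complex \<Rightarrow> 'a::{real_normed_algebra,banach} \<Rightarrow> 'a"
    and scX :: "complex \<Rightarrow> 'x::{real_normed_algebra,banach,comm_ring} \<Rightarrow> 'x"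
    and la :: "'a \<Rightarrow> 'x \<Rightarrow> 'x" and ra :: "'x \<Rightarrow> 'a \<Rightarrow> 'x"
    and \<psi> D :: "'a \<Rightarrow> 'x"
  assumes "complex_banach_algebra scA"
    and "complex_banach_algebra scX"
    and "banach_bimodule scA scX la ra"
    and "(\<Inter>\<phi>\<in>characters scX. {x. \<phi> x = 0}) = {0}"
    and "cont_alg_hom scA scX \<psi>"
    and "bounded_clinear_op scA scX D"
  shows "(psi_derivation \<psi> D \<longleftrightarrow>
           (\<forall>\<phi>\<in>characters scX. psi_derivation (\<phi> \<circ> \<psi>) (\<phi> \<circ> D)))
       \<and> ((\<forall>\<phi>\<in>characters scX. psi_derivation (\<phi> \<circ> \<psi>) (\<phi> \<circ> D)) \<longleftrightarrow>
           (\<forall>\<phi>\<in>characters scX. point_derivation \<phi> \<psi> (\<phi> \<circ> D)))"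
  using psi_derivation_iff_characters [OF assms(4)]
  by (simp add: psi_derivation_iff_point_derivation)

end
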